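(* Let $\mathbb{F}$ be an algebraically closed field. Let $A_1,\dots,A_4,B_1,\dots,B_4\in M(2)$ satisfy the Standing Hypothesis, and suppose $A_1=\begin{pmatrix}a_1&1\\0&a_1\end{pmatrix}$ and $B_1=\begin{pmatrix}b_1&0\\0&b_4\end{pmatrix}$ for some $a_1,b_1,b_4\in\mathbb{F}$. Then $\mathrm{tr}(A_1A_2A_3A_4)=\mathrm{tr}(B_1B_2B_3B_4)$.
   Context: $M(2)$ is the space of $2\times 2$ matrices over $\mathbb{F}$. Standing Hypothesis: $\mathrm{tr}(A_i)=\mathrm{tr}(B_i)$ and $\det(A_i)=\det(B_i)$ for $1\le i\le 4$; $\mathrm{tr}(A_iA_j)=\mathrm{tr}(B_iB_j)$ for $1\le i<j\le 4$; $\mathrm{tr}(A_iA_jA_k)=\mathrm{tr}(B_iB_jB_k)$ for $1\le i<j<k\le 4$. *)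

theory Defs
  imports "HOL-Analysis.Analysis" "HOL-Computational_Algebra.Polynomial"
begin

definition mat2 :: "'a::zero \<Rightarrow> 'a \<Rightarrow> 'a \<Rightarrow> 'a \<Rightarrow> 'a^2^2" where
  "mat2 a b c d = vector [vector [a, b], vector [c, d]]"

definition standing_hyp :: "(nat \<Rightarrow> 'a::comm_ring_1^2^2) \<Rightarrow> (nat \<Rightarrow> 'a^2^2) \<Rightarrow> bool" where
  "standing_hyp A B \<longleftrightarrow>
     (\<forall>i\<in>{1..4}. trace (A i) = trace (B i) \<and> det (A i) = det (B i)) \<and>
     (\<forall>i j. 1 \<le> i \<and> i < j \<and> j \<le> 4 \<longrightarrow> trace (A i ** A j) = trace (B i ** B j)) \<and>
     (\<forall>i j k. 1 \<le> i \<and> i < j \<and> j < k \<and> k \<le> 4 \<longrightarrow>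
        trace (A i ** A j ** A k) = trace (B i ** B j ** B k))"

end

theory Submission
  imports Defs
begin

text \<open>
  Equal trace and determinant force the diagonal matrix B1 to have the double
  eigenvalue of the Jordan block A1, so B1 = a1 I. Writing A1 = a1 I + E12 gives
  tr (A1 M) = a1 tr M + M21; comparing this for M = Ai with tr (B1 Bi) = a1 tr Bi
  shows that A2, A3, A4 are upper triangular. Hence so is their product, and both
  fourfold traces reduce to a1 times the equal threefold traces.
\<close>

lemma trace_2: "trace (M :: 'a::comm_ring_1^2^2) = M$1$1 + M$2$2"
  by (simp add: trace_def UNIV_2)

lemma matrix_mult_2_nth:
  "((M :: 'a::comm_ring_1^2^2) ** N)$i$j = M$i$1 * N$1$j + M$i$2 * N$2$j"
  by (simp add: matrix_matrix_mult_def UNIV_2)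

lemma mat2_nth [simp]:
  "mat2 a b c d $1$1 = a" "mat2 a b c d $1$2 = b"
  "mat2 a b c d $2$1 = c" "mat2 a b c d $2$2 = d"
  by (simp_all add: mat2_def)

lemma trace_jordan_block_mult:
  "trace (mat2 a 1 0 a ** (M :: 'a::comm_ring_1^2^2)) = a * trace M + M$2$1"
  by (simp add: trace_2 matrix_mult_2_nth algebra_simps)

lemma trace_scalar_mat2_mult:
  "trace (mat2 a 0 0 a ** (M :: 'a::comm_ring_1^2^2)) = a * trace M"
  by (simp add: trace_2 matrix_mult_2_nth algebra_simps)

lemma upper_triangular_2_mult:
  fixes M N :: "'a::comm_ring_1^2^2"
  assumes "M$2$1 = 0" and "N$2$1 = 0"
  shows "(M ** N)$2$1 = 0"
  using assms by (simp add: matrix_mult_2_nth)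

lemma mat2_diagonal_eq_scalar_of_char_poly_jordan_block:
  fixes a b d :: "'a::idom"
  assumes "trace (mat2 a 1 0 a) = trace (mat2 b 0 0 d)"
    and "det (mat2 a 1 0 a) = det (mat2 b 0 0 d)"
  shows "b = a" and "d = a"
proof -
  have sum: "d = a + a - b" and prod: "a * a = b * d"
    using assms by (simp_all add: trace_2 det_2 algebra_simps)
  have "(b - a)^2 = 0"
    using prod unfolding sum by (simp add: power2_eq_square algebra_simps)
  then show "b = a" by simp
  with sum show "d = a" by simp
qed

theorem lemma6:
  fixes A B :: "nat \<Rightarrow> 'a::alg_closed_field^2^2"
    and a1 b1 b4 :: 'a
  assumes "standing_hyp A B"
    and "A 1 = mat2 a1 1 0 a1"
    and "B 1 = mat2 b1 0 0 b4"
  shows "trace (A 1 ** A 2 ** A 3 ** A 4) = trace (B 1 ** B 2 ** B 3 ** B 4)"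
proof -
  note hyp = assms(1)[unfolded standing_hyp_def]
  have "trace (A 1) = trace (B 1)" "det (A 1) = det (B 1)"
    using hyp by auto
  then have "b1 = a1" "b4 = a1"
    using mat2_diagonal_eq_scalar_of_char_poly_jordan_block by (simp_all only: assms(2,3))
  then have B1: "B 1 = mat2 a1 0 0 a1" using assms(3) by simp
  have upper: "A i $2$1 = 0" if "i \<in> {2,3,4}" for i
  proof -
    have "trace (A 1 ** A i) = trace (B 1 ** B i)" "trace (A i) = trace (B i)"
      using hyp that by auto
    then show ?thesis
      unfolding assms(2) B1 trace_jordan_block_mult trace_scalar_mat2_mult by simp
  qed
  have "(A 2 ** A 3 ** A 4)$2$1 = 0"
    using upper by (simp add: upper_triangular_2_mult)
  moreover have "trace (A 2 ** A 3 ** A 4) = trace (B 2 ** B 3 ** B 4)"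
    using hyp by auto
  ultimately show ?thesis
    unfolding matrix_mul_assoc[symmetric] assms(2) B1
      trace_jordan_block_mult trace_scalar_mat2_mult by simp
qed

end
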